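(* Let $b\ge 2$ be an integer, let $A_b=\{1+(b-1)r : r\in\mathbb{N}\}$, and let $\mathrm{fact}_b:A_b\to A_b$ be defined by $\mathrm{fact}_b(1+(b-1)r)=\prod_{k=1}^{r}(1+(b-1)k)$ for all $r\in\mathbb{N}$ (the empty product being $1$). Then for every $n\in A_b$, \[1\le \frac{\mathrm{fact}_b(n)}{e^{\frac{1}{b-1}}\left(\frac{n}{e}\right)^{\frac{n}{b-1}}}\le n.\] *)

theory Defs
  imports Complex_Main
begin

definition A :: "nat \<Rightarrow> nat set" where
  "A b = {1 + (b - 1) * r | r. True}"

definition fact_b :: "nat \<Rightarrow> nat \<Rightarrow> nat" where
  "fact_b b n = (\<Prod>k = 1..(n - 1) div (b - 1). 1 + (b - 1) * k)"

end

theory Submission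
  imports Defs
begin

text \<open>
  Put \<open>d = b - 1\<close> and \<open>n = 1 + d r\<close>. The logarithm of the denominator is
  \<open>\<phi>(n) = (n (ln n - 1) + 1) / d\<close>, and \<open>d \<phi>\<close> is an antiderivative of \<open>ln\<close> vanishing at 1.
  Since \<open>ln\<close> is increasing, \<open>\<phi>(x + d) - \<phi>(x)\<close> lies between \<open>ln x\<close> and \<open>ln (x + d)\<close>;
  telescoping along \<open>x = 1, 1 + d, \<dots>, n\<close> squeezes \<open>ln (fact\<^sub>b n) = \<Sum>\<^sub>k ln (1 + d k)\<close>
  between \<open>\<phi>(n)\<close> and \<open>\<phi>(n) + ln n\<close>.
\<close>

lemma xlnx_diff_bounds:
  fixes x y :: real
  assumes "0 < x" "x \<le> y"
  shows "(y - x) * ln x \<le> (y * ln y - y) - (x * ln x - x)"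
    and "(y * ln y - y) - (x * ln x - x) \<le> (y - x) * ln y"
proof -
  have "0 < y" using assms by linarith
  have "ln (x / y) \<le> x / y - 1" using ln_le_minus_one \<open>0 < x\<close> \<open>0 < y\<close> by simp
  then have "y * (ln x - ln y) \<le> y * (x / y - 1)"
    using \<open>0 < x\<close> \<open>0 < y\<close> by (intro mult_left_mono) (auto simp: ln_div)
  also have "\<dots> = x - y" using \<open>0 < y\<close> by (simp add: field_simps)
  finally show "(y - x) * ln x \<le> (y * ln y - y) - (x * ln x - x)"
    by (simp add: algebra_simps)
  have "ln (y / x) \<le> y / x - 1" using ln_le_minus_one \<open>0 < x\<close> \<open>0 < y\<close> by simp
  then have "x * (ln y - ln x) \<le> x * (y / x - 1)"
    using \<open>0 < x\<close> \<open>0 < y\<close> by (intro mult_left_mono) (auto simp: ln_div)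
  also have "\<dots> = y - x" using \<open>0 < x\<close> by (simp add: field_simps)
  finally show "(y * ln y - y) - (x * ln x - x) \<le> (y - x) * ln y"
    by (simp add: algebra_simps)
qed

lemma telescoping_le_sum:
  fixes g a :: "nat \<Rightarrow> real"
  assumes "\<And>k. g (Suc k) - g k \<le> a (Suc k)"
  shows "g r - g 0 \<le> (\<Sum>k = 1..r. a k)"
proof (induction r)
  case (Suc r)
  then show ?case using assms[of r] by simp
qed simp

lemma sum_le_telescoping:
  fixes g a :: "nat \<Rightarrow> real"
  assumes "\<And>k. a k \<le> g (Suc k) - g k"
  shows "(\<Sum>k = 1..r. a k) \<le> g r - g 0 + a r - a 0"
proof (induction r)
  case (Suc r)
  then show ?case using assms[of r] by simp
qed simp

definition log_fact_approx :: "real \<Rightarrow> real \<Rightarrow> real" where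
  "log_fact_approx d x = (x * (ln x - 1) + 1) / d"

lemma log_fact_approx_1 [simp]: "log_fact_approx d 1 = 0"
  by (simp add: log_fact_approx_def)

lemma log_fact_approx_step_bounds:
  fixes d x :: real
  assumes "0 < d" "0 < x"
  shows "ln x \<le> log_fact_approx d (x + d) - log_fact_approx d x"
    and "log_fact_approx d (x + d) - log_fact_approx d x \<le> ln (x + d)"
proof -
  have step: "log_fact_approx d (x + d) - log_fact_approx d x
      = (((x + d) * ln (x + d) - (x + d)) - (x * ln x - x)) / d"
    using assms by (simp add: log_fact_approx_def field_simps)
  have "x \<le> x + d" using assms by simp
  from xlnx_diff_bounds[OF \<open>0 < x\<close> this] show
    "ln x \<le> log_fact_approx d (x + d) - log_fact_approx d x"
    "log_fact_approx d (x + d) - log_fact_approx d x \<le> ln (x + d)"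
    unfolding step using assms by (simp_all add: field_simps)
qed

lemma log_prod_arith_bounds:
  fixes d :: real and r :: nat
  assumes d: "0 < d"
  defines "S \<equiv> (\<Sum>k = 1..r. ln (1 + d * k))"
  shows "log_fact_approx d (1 + d * r) \<le> S"
    and "S \<le> log_fact_approx d (1 + d * r) + ln (1 + d * r)"
proof -
  define g where "g k = log_fact_approx d (1 + d * k)" for k :: nat
  have pos: "0 < 1 + d * k" for k :: nat using d by (simp add: add_pos_nonneg)
  have shift: "1 + d * Suc k = (1 + d * k) + d" for k :: nat by (simp add: algebra_simps)
  have "g (Suc k) - g k \<le> ln (1 + d * Suc k)" for k
    using log_fact_approx_step_bounds(2)[OF d pos] unfolding g_def shift .
  from telescoping_le_sum[of g, OF this] show "log_fact_approx d (1 + d * r) \<le> S"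
    by (simp add: g_def S_def)
  have "ln (1 + d * k) \<le> g (Suc k) - g k" for k
    using log_fact_approx_step_bounds(1)[OF d pos] unfolding g_def shift .
  from sum_le_telescoping[of _ g, OF this] show "S \<le> log_fact_approx d (1 + d * r) + ln (1 + d * r)"
    by (simp add: g_def S_def)
qed

lemma fact_b_eq_exp_sum_ln:
  fixes b r :: nat
  assumes "b \<ge> 2"
  shows "real (fact_b b (1 + (b - 1) * r)) = exp (\<Sum>k = 1..r. ln (1 + (real b - 1) * k))"
proof -
  have "(1 + (b - 1) * r - 1) div (b - 1) = r" using assms by simp
  then have "real (fact_b b (1 + (b - 1) * r)) = (\<Prod>k = 1..r. 1 + (real b - 1) * k)"
    using assms by (simp add: fact_b_def of_nat_diff)
  also have "\<dots> = (\<Prod>k = 1..r. exp (ln (1 + (real b - 1) * k)))"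
    using assms by (intro prod.cong) (auto simp: add_pos_nonneg)
  finally show ?thesis by (simp add: exp_sum)
qed

lemma stirling_denominator_eq_exp:
  fixes d x :: real
  assumes "0 < x"
  shows "exp (1 / d) * (x / exp 1) powr (x / d) = exp (log_fact_approx d x)"
  using assms by (simp add: powr_def ln_div log_fact_approx_def exp_add[symmetric] add_divide_distrib)

theorem mainTheorem1:
  fixes b n :: nat
  assumes "b \<ge> 2" and "n \<in> A b"
  shows "1 \<le> real (fact_b b n) / (exp (1 / (real b - 1)) * (real n / exp 1) powr (real n / (real b - 1)))
       \<and> real (fact_b b n) / (exp (1 / (real b - 1)) * (real n / exp 1) powr (real n / (real b - 1))) \<le> real n"
proof -
  obtain r where n: "n = 1 + (b - 1) * r" using assms(2) by (auto simp: A_def)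
  define d where "d = real b - 1"
  define S where "S = (\<Sum>k = 1..r. ln (1 + d * k))"
  have "0 < d" using assms(1) by (simp add: d_def)
  have real_n: "real n = 1 + d * r" using n assms(1) by (simp add: d_def of_nat_diff)
  have "0 < real n" using real_n \<open>0 < d\<close> by (simp add: add_pos_nonneg)
  have ratio: "real (fact_b b n) / (exp (1 / d) * (real n / exp 1) powr (real n / d))
      = exp (S - log_fact_approx d (real n))"
    using fact_b_eq_exp_sum_ln[OF assms(1), of r] stirling_denominator_eq_exp[OF \<open>0 < real n\<close>]
    by (simp add: n S_def d_def exp_diff)
  have "log_fact_approx d (real n) \<le> S" "S - log_fact_approx d (real n) \<le> ln (real n)"
    using log_prod_arith_bounds[OF \<open>0 < d\<close>, of r] by (simp_all add: real_n S_def)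
  then have "1 \<le> exp (S - log_fact_approx d (real n))"
    and "exp (S - log_fact_approx d (real n)) \<le> exp (ln (real n))"
    by simp_all
  then show ?thesis
    using \<open>0 < real n\<close> unfolding ratio[unfolded d_def] d_def by simp
qed

end
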